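(* For every integer $n\ge 0$, $$\binom{2n}{n}\,{}_3F_2\!\left(\begin{matrix}-n,\,-n,\,\tfrac12\\ -n+\tfrac12,\,2\end{matrix};1\right)=\begin{cases}\binom{n}{n/2}^2,& n \text{ even},\\[2pt] \binom{n}{(n-1)/2}^2,& n\text{ odd}.\end{cases}$$
   Context: ${}_3F_2\!\left(\begin{matrix}a_1,a_2,a_3\\ b_1,b_2\end{matrix};z\right)=\sum_{j\ge0}\frac{(a_1)_j(a_2)_j(a_3)_j}{(b_1)_j(b_2)_j}\frac{z^j}{j!}$, where $(x)_j=x(x+1)\cdots(x+j-1)$ is the Pochhammer symbol; when $a_1=-n$ is a nonpositive integer the series terminates at $j=n$. *)

theory Defs
  imports Complex_Main
begin

definition hyp3F2 :: "real \<Rightarrow> real \<Rightarrow> real \<Rightarrow> real \<Rightarrow> real \<Rightarrow> real \<Rightarrow> real" where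
  "hyp3F2 a1 a2 a3 b1 b2 z =
     (\<Sum>j. pochhammer a1 j * pochhammer a2 j * pochhammer a3 j
            / (pochhammer b1 j * pochhammer b2 j) * z ^ j / fact j)"

end

theory Submission
  imports Defs
begin

text \<open>Multiplied by \<open>C(2n,n)\<close>, the terminating \<open>\<^sub>3F\<^sub>2\<close> series becomes the sum
  \<open>\<Sum>j\<le>n. (-1)^j C(n,j) C(2j,j) C(2n-2j,n-j)/(j+1)\<close>.
  Zeilberger's algorithm produces a second-order recurrence with polynomial coefficients for this
  sum, together with a rational certificate under which the recurrence applied to the summand
  telescopes in \<open>j\<close>. The squared middle binomial coefficient satisfies the same recurrence
  (a direct check, separately for even and odd \<open>n\<close>), the two sequences agree for
  \<open>n = 0, 1\<close>, and the leading coefficient of the recurrence never vanishes.\<close>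

lemma real_Suc_choose_Suc:
  "(real k + 1) * real (Suc n choose Suc k) = (real n + 1) * real (n choose k)"
  using Suc_times_binomial[of k n] by (metis add.commute of_nat_Suc of_nat_mult)

lemma real_Suc_choose:
  assumes "k \<le> n"
  shows "(real n + 1 - real k) * real (Suc n choose k) = (real n + 1) * real (n choose k)"
proof -
  have "real (Suc n - k) * real (Suc n choose k) = real (Suc n) * real (n choose k)"
    using binomial_absorb_comp[of "Suc n" k] by (metis of_nat_mult diff_Suc_1)
  with assms show ?thesis by (simp add: of_nat_diff add.commute)
qed

lemma real_choose_Suc:
  assumes "k < n"
  shows "(real k + 1) * real (n choose Suc k) = (real n - real k) * real (n choose k)"
proof -
  obtain n' where n: "n = Suc n'" using assms by (cases n) auto
  have "(real k + 1) * real (n choose Suc k) = (real n' + 1) * real (n' choose k)"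
    unfolding n by (rule real_Suc_choose_Suc)
  also have "\<dots> = (real n - real k) * real (n choose k)"
    using real_Suc_choose[of k n'] assms n by (simp add: add.commute)
  finally show ?thesis .
qed

lemma real_central_binomial_Suc:
  "(real k + 1) * real (2 * Suc k choose Suc k) = 2 * (2 * real k + 1) * real (2 * k choose k)"
proof -
  have "(real k + 1) * real (2 * Suc k choose Suc k) = 2 * ((real k + 1) * real (Suc (2 * k) choose k))"
    using real_Suc_choose_Suc[of k "Suc (2 * k)"] by (simp del: binomial_Suc_Suc add: algebra_simps)
  also have "(real k + 1) * real (Suc (2 * k) choose k) = (2 * real k + 1) * real (2 * k choose k)"
    using real_Suc_choose[of k "2 * k"] by (simp del: binomial_Suc_Suc add: algebra_simps)
  finally show ?thesis by simp
qed

lemma two_real_plus_one_neq: "2 * real a + 1 \<noteq> 2 * real b"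
proof -
  have "2 * a + 1 \<noteq> 2 * b" by presburger
  then have "real (2 * a + 1) \<noteq> real (2 * b)" by (metis of_nat_eq_iff)
  then show ?thesis by simp
qed

definition binom_term :: "nat \<Rightarrow> nat \<Rightarrow> real" where
  "binom_term n j = (if j \<le> n then (-1) ^ j * real (n choose j) * real (2 * j choose j)
      * real (2 * (n - j) choose (n - j)) / (real j + 1) else 0)"

lemma binom_term_Suc_right:
  "binom_term n (Suc j) * ((real j + 1) * (real j + 2) * (2 * real n - 2 * real j - 1))
     = - binom_term n j * (real n - real j)\<^sup>2 * (2 * real j + 1)"
proof (cases "j < n")
  case True
  define m where "m = n - Suc j"
  have nj: "n - j = Suc m" "n - Suc j = m" "real n - real j = real m + 1"
    using True by (simp_all add: m_def of_nat_diff)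
  have "binom_term n (Suc j) = - ((-1) ^ j * real (n choose Suc j) * real (2 * Suc j choose Suc j)
      * real (2 * m choose m) / (real j + 2))"
    using True unfolding binom_term_def nj(2) by (simp add: add.commute)
  also have "real (n choose Suc j) = (real m + 1) * real (n choose j) / (real j + 1)"
    using real_choose_Suc[OF True] nj(3) by (simp add: field_simps)
  also have "real (2 * Suc j choose Suc j) = 2 * (2 * real j + 1) * real (2 * j choose j) / (real j + 1)"
    using real_central_binomial_Suc[of j] by (simp add: field_simps)
  finally have left: "binom_term n (Suc j) = - ((-1) ^ j * ((real m + 1) * real (n choose j) / (real j + 1))
      * (2 * (2 * real j + 1) * real (2 * j choose j) / (real j + 1)) * real (2 * m choose m) / (real j + 2))" .
  have "binom_term n j = (-1) ^ j * real (n choose j) * real (2 * j choose j)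
      * real (2 * Suc m choose Suc m) / (real j + 1)"
    using True unfolding binom_term_def nj(1) by simp
  also have "real (2 * Suc m choose Suc m) = 2 * (2 * real m + 1) * real (2 * m choose m) / (real m + 1)"
    using real_central_binomial_Suc[of m] by (simp add: field_simps)
  finally have right: "binom_term n j = (-1) ^ j * real (n choose j) * real (2 * j choose j)
      * (2 * (2 * real m + 1) * real (2 * m choose m) / (real m + 1)) / (real j + 1)" .
  have odd: "2 * real n - 2 * real j - 1 = 2 * real m + 1" using nj(3) by simp
  show ?thesis
    unfolding left right nj(3) odd by (simp add: divide_simps power2_eq_square) algebra
qed (simp add: binom_term_def)

lemma binom_term_Suc_left:
  "binom_term (Suc n) j * (real n + 1 - real j)\<^sup>2
     = binom_term n j * (2 * (real n + 1) * (2 * real n + 1 - 2 * real j))"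
proof (cases "j \<le> n")
  case True
  define m where "m = n - j"
  have nj: "Suc n - j = Suc m" "n - j = m" "real n + 1 - real j = real m + 1"
    using True by (simp_all add: m_def of_nat_diff Suc_diff_le)
  have "binom_term (Suc n) j = (-1) ^ j * real (Suc n choose j) * real (2 * j choose j)
      * real (2 * Suc m choose Suc m) / (real j + 1)"
    using True unfolding binom_term_def nj(1) by simp
  also have "real (Suc n choose j) = (real n + 1) * real (n choose j) / (real m + 1)"
    using real_Suc_choose[OF True] nj(3) by (simp add: field_simps)
  also have "real (2 * Suc m choose Suc m) = 2 * (2 * real m + 1) * real (2 * m choose m) / (real m + 1)"
    using real_central_binomial_Suc[of m] by (simp add: field_simps)
  finally have left: "binom_term (Suc n) j = (-1) ^ j * ((real n + 1) * real (n choose j) / (real m + 1))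
      * real (2 * j choose j) * (2 * (2 * real m + 1) * real (2 * m choose m) / (real m + 1)) / (real j + 1)" .
  have right: "binom_term n j = (-1) ^ j * real (n choose j) * real (2 * j choose j)
      * real (2 * m choose m) / (real j + 1)"
    using True unfolding binom_term_def nj(2) by simp
  have odd: "2 * real n + 1 - 2 * real j = 2 * real m + 1" using nj(3) by simp
  show ?thesis
    unfolding left right nj(3) odd by (simp add: divide_simps power2_eq_square) algebra
qed (simp add: binom_term_def)

definition rec_coeff0 :: "real \<Rightarrow> real" where
  "rec_coeff0 x = 320 + 1088 * x + 1424 * x^2 + 896 * x^3 + 272 * x^4 + 32 * x^5"

definition rec_coeff1 :: "real \<Rightarrow> real" where
  "rec_coeff1 x = 112 + 240 * x + 188 * x^2 + 64 * x^3 + 8 * x^4"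

definition rec_coeff2 :: "real \<Rightarrow> real" where
  "rec_coeff2 x = - (108 + 252 * x + 231 * x^2 + 104 * x^3 + 23 * x^4 + 2 * x^5)"

definition rec_op :: "(nat \<Rightarrow> real) \<Rightarrow> nat \<Rightarrow> real" where
  "rec_op f n = rec_coeff0 (real n) * f n + rec_coeff1 (real n) * f (Suc n)
     + rec_coeff2 (real n) * f (Suc (Suc n))"

definition cert_poly :: "real \<Rightarrow> real \<Rightarrow> real" where
  "cert_poly x y = y * (64 + 3 * y - 51 * y^2 + 10 * y^3) + x * y * (166 + 52 * y - 100 * y^2 + 14 * y^3)
     + x^2 * y * (151 + 85 * y - 62 * y^2 + 4 * y^3) + x^3 * y * (58 + 46 * y - 12 * y^2)
     + x^4 * y * (8 + 8 * y)"

text \<open>The certificate check: with \<open>F = binom_term (n + 2) j\<close>, the quantities \<open>a\<close>, \<open>b\<close>, \<open>c\<close>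
  stand for \<open>binom_term n j\<close>, \<open>binom_term (n + 1) j\<close> and \<open>binom_term (n + 2) (j + 1)\<close>.\<close>

lemma certificate_identity:
  fixes a b c F x y :: real
  assumes x: "x \<ge> 0" and y: "y \<ge> 0"
    and nz: "2 * x + 1 - 2 * y \<noteq> 0" "2 * x + 3 - 2 * y \<noteq> 0"
    and a: "b * (x + 1 - y)\<^sup>2 = a * (2 * (x + 1) * (2 * x + 1 - 2 * y))"
    and b: "F * (x + 2 - y)\<^sup>2 = b * (2 * (x + 2) * (2 * x + 3 - 2 * y))"
    and c: "c * ((y + 1) * (y + 2) * (2 * x + 3 - 2 * y)) = - F * (x + 2 - y)\<^sup>2 * (2 * y + 1)"
  shows "rec_coeff0 x * a + rec_coeff1 x * b + rec_coeff2 x * F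
    = c * cert_poly x (y + 1) / (2 * x + 1 - 2 * y) - F * cert_poly x y / (2 * x + 3 - 2 * y)"
proof -
  have pos: "x + 1 \<noteq> 0" "x + 2 \<noteq> 0" "y + 1 \<noteq> 0" "y + 2 \<noteq> 0" using x y by auto
  have b': "b = F * (x + 2 - y)\<^sup>2 / (2 * (x + 2) * (2 * x + 3 - 2 * y))"
    using b nz pos by (simp add: eq_divide_eq)
  have a': "a = b * (x + 1 - y)\<^sup>2 / (2 * (x + 1) * (2 * x + 1 - 2 * y))"
    using a nz pos by (simp add: eq_divide_eq)
  have c': "c = - F * (x + 2 - y)\<^sup>2 * (2 * y + 1) / ((y + 1) * (y + 2) * (2 * x + 3 - 2 * y))"
    by (subst eq_divide_eq) (use c nz pos in simp)
  show ?thesis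
    unfolding a' b' c' rec_coeff0_def rec_coeff1_def rec_coeff2_def cert_poly_def
    using nz pos by (simp add: divide_simps) algebra
qed

definition certificate :: "nat \<Rightarrow> nat \<Rightarrow> real" where
  "certificate n j = binom_term (Suc (Suc n)) j * cert_poly (real n) (real j) / (2 * real n + 3 - 2 * real j)"

lemma rec_op_binom_term_telescopes:
  "rec_op (\<lambda>n. binom_term n j) n = certificate n (Suc j) - certificate n j"
proof -
  have "rec_op (\<lambda>n. binom_term n j) n
      = binom_term (Suc (Suc n)) (Suc j) * cert_poly (real n) (real j + 1) / (2 * real n + 1 - 2 * real j)
        - binom_term (Suc (Suc n)) j * cert_poly (real n) (real j) / (2 * real n + 3 - 2 * real j)"
    unfolding rec_op_def
  proof (rule certificate_identity)
    show "2 * real n + 1 - 2 * real j \<noteq> 0" "2 * real n + 3 - 2 * real j \<noteq> 0"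
      using two_real_plus_one_neq[of n j] two_real_plus_one_neq[of "Suc n" j] by auto
    show "binom_term (Suc n) j * (real n + 1 - real j)\<^sup>2
        = binom_term n j * (2 * (real n + 1) * (2 * real n + 1 - 2 * real j))"
      by (rule binom_term_Suc_left)
    show "binom_term (Suc (Suc n)) j * (real n + 2 - real j)\<^sup>2
        = binom_term (Suc n) j * (2 * (real n + 2) * (2 * real n + 3 - 2 * real j))"
      using binom_term_Suc_left[of "Suc n" j] by (simp add: algebra_simps)
    show "binom_term (Suc (Suc n)) (Suc j) * ((real j + 1) * (real j + 2) * (2 * real n + 3 - 2 * real j))
        = - binom_term (Suc (Suc n)) j * (real n + 2 - real j)\<^sup>2 * (2 * real j + 1)"
      using binom_term_Suc_right[of "Suc (Suc n)" j] by (simp add: algebra_simps)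
  qed simp_all
  then show ?thesis unfolding certificate_def by (simp add: add.commute)
qed

definition binom_sum :: "nat \<Rightarrow> real" where
  "binom_sum n = (\<Sum>j\<le>n. binom_term n j)"

lemma sum_lessThan_binom_term:
  assumes "n < N"
  shows "(\<Sum>j<N. binom_term n j) = binom_sum n"
  unfolding binom_sum_def
  by (rule sum.mono_neutral_left[symmetric]) (use assms in \<open>auto simp: binom_term_def\<close>)

lemma rec_op_binom_sum: "rec_op binom_sum n = 0"
proof -
  have "rec_op binom_sum n = (\<Sum>j<n + 3. rec_op (\<lambda>n. binom_term n j) n)"
    unfolding rec_op_def sum.distrib sum_distrib_left[symmetric]
    by (simp add: sum_lessThan_binom_term)
  also have "\<dots> = certificate n (n + 3) - certificate n 0"
    unfolding rec_op_binom_term_telescopes by (rule sum_lessThan_telescope)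
  also have "\<dots> = 0"
    by (simp add: certificate_def binom_term_def cert_poly_def)
  finally show ?thesis .
qed

definition middle_binomial_sq :: "nat \<Rightarrow> real" where
  "middle_binomial_sq n = real ((n choose (n div 2))\<^sup>2)"

lemma rec_coeff_identity_even:
  fixes u v w y :: real
  assumes "y \<ge> 0" "(y + 1) * v = (2 * y + 1) * u" "(y + 1) * w = (2 * y + 2) * v"
  shows "rec_coeff0 (2 * y) * u\<^sup>2 + rec_coeff1 (2 * y) * v\<^sup>2 + rec_coeff2 (2 * y) * w\<^sup>2 = 0"
proof -
  have nz: "y + 1 \<noteq> 0" using assms by auto
  have v: "v = (2 * y + 1) * u / (y + 1)" using assms(2) nz by (simp add: eq_divide_eq mult.commute)
  have w: "w = (2 * y + 2) * v / (y + 1)" using assms(3) nz by (simp add: eq_divide_eq mult.commute)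
  show ?thesis
    unfolding w v rec_coeff0_def rec_coeff1_def rec_coeff2_def using nz by (simp add: divide_simps) algebra
qed

lemma rec_coeff_identity_odd:
  fixes u v w y :: real
  assumes "y \<ge> 0" "(y + 1) * v = (2 * y + 2) * u" "(y + 2) * w = (2 * y + 3) * v"
  shows "rec_coeff0 (2 * y + 1) * u\<^sup>2 + rec_coeff1 (2 * y + 1) * v\<^sup>2 + rec_coeff2 (2 * y + 1) * w\<^sup>2 = 0"
proof -
  have nz: "y + 1 \<noteq> 0" "y + 2 \<noteq> 0" using assms by auto
  have v: "v = (2 * y + 2) * u / (y + 1)" using assms(2) nz by (simp add: eq_divide_eq mult.commute)
  have w: "w = (2 * y + 3) * v / (y + 2)" using assms(3) nz by (simp add: eq_divide_eq mult.commute)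
  show ?thesis
    unfolding w v rec_coeff0_def rec_coeff1_def rec_coeff2_def using nz by (simp add: divide_simps) algebra
qed

lemma rec_op_middle_binomial_sq: "rec_op middle_binomial_sq n = 0"
proof (cases "even n")
  case True
  then obtain m where m: "n = 2 * m" by blast
  have "(real m + 1) * real (Suc (2 * m) choose m) = (2 * real m + 1) * real (2 * m choose m)"
    using real_Suc_choose[of m "2 * m"] by (simp add: algebra_simps)
  moreover have "(real m + 1) * real (Suc (Suc (2 * m)) choose Suc m) = (2 * real m + 2) * real (Suc (2 * m) choose m)"
    using real_Suc_choose_Suc[of m "Suc (2 * m)"] by (simp add: algebra_simps)
  ultimately have "rec_coeff0 (2 * real m) * real (2 * m choose m)^2
      + rec_coeff1 (2 * real m) * real (Suc (2 * m) choose m)^2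
      + rec_coeff2 (2 * real m) * real (Suc (Suc (2 * m)) choose Suc m)^2 = 0"
    by (intro rec_coeff_identity_even) simp_all
  then show ?thesis unfolding rec_op_def middle_binomial_sq_def m by simp
next
  case False
  then obtain m where m: "n = 2 * m + 1" using oddE by blast
  have "(real m + 1) * real (Suc (Suc (2 * m)) choose Suc m) = (2 * real m + 2) * real (Suc (2 * m) choose m)"
    using real_Suc_choose_Suc[of m "Suc (2 * m)"] by (simp add: algebra_simps)
  moreover have "(real m + 2) * real (Suc (Suc (Suc (2 * m))) choose Suc m) = (2 * real m + 3) * real (Suc (Suc (2 * m)) choose Suc m)"
    using real_Suc_choose[of "Suc m" "Suc (Suc (2 * m))"] by (simp add: algebra_simps)
  ultimately have "rec_coeff0 (2 * real m + 1) * real (Suc (2 * m) choose m)^2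
      + rec_coeff1 (2 * real m + 1) * real (Suc (Suc (2 * m)) choose Suc m)^2
      + rec_coeff2 (2 * real m + 1) * real (Suc (Suc (Suc (2 * m))) choose Suc m)^2 = 0"
    by (intro rec_coeff_identity_odd) simp_all
  then show ?thesis unfolding rec_op_def middle_binomial_sq_def m by (simp add: add.commute)
qed

lemma rec_coeff2_neg:
  assumes "x \<ge> 0"
  shows "rec_coeff2 x < 0"
proof -
  have "0 < 108 + 252 * x + 231 * x^2 + 104 * x^3 + 23 * x^4 + 2 * x^5"
    using assms by (intro add_pos_nonneg) auto
  then show ?thesis unfolding rec_coeff2_def by simp
qed

lemma rec_op_solution_unique:
  assumes "\<And>n. rec_op f n = 0" "\<And>n. rec_op g n = 0" "f 0 = g 0" "f 1 = g 1"
  shows "f n = g n"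
proof -
  have "f n = g n \<and> f (Suc n) = g (Suc n)"
  proof (induction n)
    case 0
    then show ?case using assms(3,4) by simp
  next
    case (Suc n)
    have "rec_op f n - rec_op g n = rec_coeff2 (real n) * (f (Suc (Suc n)) - g (Suc (Suc n)))"
      using Suc.IH unfolding rec_op_def by (simp add: algebra_simps)
    then show ?case using Suc.IH assms(1,2)[of n] rec_coeff2_neg[of "real n"] by simp
  qed
  then show ?thesis ..
qed

definition hyp3F2_term :: "real \<Rightarrow> real \<Rightarrow> real \<Rightarrow> real \<Rightarrow> real \<Rightarrow> real \<Rightarrow> nat \<Rightarrow> real" where
  "hyp3F2_term a1 a2 a3 b1 b2 z j = pochhammer a1 j * pochhammer a2 j * pochhammer a3 j
     / (pochhammer b1 j * pochhammer b2 j) * z ^ j / fact j"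

lemma hyp3F2_eq_suminf: "hyp3F2 a1 a2 a3 b1 b2 z = (\<Sum>j. hyp3F2_term a1 a2 a3 b1 b2 z j)"
  unfolding hyp3F2_def hyp3F2_term_def ..

lemma hyp3F2_term_Suc:
  assumes "pochhammer b1 (Suc j) \<noteq> 0" "pochhammer b2 (Suc j) \<noteq> 0"
  shows "hyp3F2_term a1 a2 a3 b1 b2 z (Suc j) * ((b1 + real j) * (b2 + real j) * (real j + 1))
    = hyp3F2_term a1 a2 a3 b1 b2 z j * ((a1 + real j) * (a2 + real j) * (a3 + real j) * z)"
proof -
  have "pochhammer b1 j \<noteq> 0" "b1 + real j \<noteq> 0" "pochhammer b2 j \<noteq> 0" "b2 + real j \<noteq> 0"
    using assms by (simp_all add: pochhammer_Suc)
  then show ?thesis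
    unfolding hyp3F2_term_def pochhammer_Suc fact_Suc power_Suc by (simp add: divide_simps)
qed

lemma binom_term_eq_hyp3F2_term:
  "binom_term n j = real (2 * n choose n) * hyp3F2_term (- real n) (- real n) (1/2) (- real n + 1/2) 2 1 j"
proof (induction j)
  case 0
  show ?case by (simp add: binom_term_def hyp3F2_term_def)
next
  case (Suc j)
  let ?T = "hyp3F2_term (- real n) (- real n) (1/2) (- real n + 1/2) 2 1"
  have poch_nz: "pochhammer (- real n + 1/2) (Suc j) \<noteq> 0"
  proof
    assume "pochhammer (- real n + 1/2) (Suc j) = 0"
    then obtain k where "- real n + 1/2 = - real k" by (auto simp: pochhammer_eq_0_iff)
    then show False using two_real_plus_one_neq[of k n] by simp
  qed
  have D: "(real j + 1) * (real j + 2) * (2 * real n - 2 * real j - 1) \<noteq> 0"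
    using two_real_plus_one_neq[of j n] by simp
  have "pochhammer (2::real) (Suc j) \<noteq> 0" by (simp add: pochhammer_pos less_imp_neq[symmetric])
  note step = hyp3F2_term_Suc[OF poch_nz this, of "- real n" "- real n" "1/2" 1]
  let ?C = "real (2 * n choose n)"
  have "?C * ?T (Suc j) * ((real j + 1) * (real j + 2) * (2 * real n - 2 * real j - 1))
      = - 2 * ?C * (?T (Suc j) * ((- real n + 1/2 + real j) * (2 + real j) * (real j + 1)))"
    by (simp add: field_simps)
  also have "\<dots> = - 2 * ?C * (?T j * ((- real n + real j) * (- real n + real j) * (1/2 + real j) * 1))"
    unfolding step ..
  also have "\<dots> = - (?C * ?T j) * (real n - real j)\<^sup>2 * (2 * real j + 1)"
    by (simp add: field_simps power2_eq_square)
  also have "\<dots> = - binom_term n j * (real n - real j)\<^sup>2 * (2 * real j + 1)"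
    unfolding Suc.IH ..
  also have "\<dots> = binom_term n (Suc j) * ((real j + 1) * (real j + 2) * (2 * real n - 2 * real j - 1))"
    by (rule binom_term_Suc_right[symmetric])
  finally show ?case using D by simp
qed

lemma binom_sum_eq_hyp3F2:
  "binom_sum n = real (2 * n choose n) * hyp3F2 (- real n) (- real n) (1/2) (- real n + 1/2) 2 1"
proof -
  let ?T = "hyp3F2_term (- real n) (- real n) (1/2) (- real n + 1/2) 2 1"
  have "?T j = 0" if "j \<notin> {..n}" for j
    using binom_term_eq_hyp3F2_term[of n j] that by (simp add: binom_term_def)
  then have "(\<Sum>j. ?T j) = (\<Sum>j\<le>n. ?T j)" by (intro suminf_finite) auto
  then show ?thesis
    unfolding hyp3F2_eq_suminf binom_sum_def binom_term_eq_hyp3F2_term by (simp add: sum_distrib_left)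
qed

theorem mainTheorem5:
  fixes n :: nat
  shows "real ((2*n) choose n) *
           hyp3F2 (- real n) (- real n) (1/2) (- real n + 1/2) 2 1 =
         (if even n then real ((n choose (n div 2))^2)
          else real ((n choose ((n - 1) div 2))^2))"
proof -
  have "binom_sum n = middle_binomial_sq n"
    by (rule rec_op_solution_unique)
       (simp_all add: rec_op_binom_sum rec_op_middle_binomial_sq,
        simp_all add: binom_sum_def binom_term_def middle_binomial_sq_def)
  moreover have "odd n \<Longrightarrow> (n - 1) div 2 = n div 2" by (auto elim: oddE)
  ultimately show ?thesis
    unfolding binom_sum_eq_hyp3F2 middle_binomial_sq_def by simp
qed

end
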